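(* Let $F:[n]^\ell\to\mathbb{R}$ be permutation-invariant. Then: (1) for every $a\in[n]$, every integer $0\le i\le\ell-1$ and every $X\in[n]^i$, $f_{i+1,F}(a,X)=f_{i,F|_{\{a\}}}(X)-f_{i,F}(X)$; (2) for every integer $0\le i\le\ell$ and every $X\in[n]^i$, $$f_{i,F}(X)=\sum_{B\subseteq\{1,\dots,i\}}(-1)^{i-|B|}\,\delta_{X|_B}(F),$$ where $X|_B$ is the ordered tuple of entries of $X$ with indices in $B$.
   Context: $[n]=\{0,\dots,n-1\}=\mathbb{Z}/n\mathbb{Z}$, $\chi_t(x)=e^{2\pi itx/n}$, $\chi_T(x)=\prod_j\chi_{T_j}(x_j)$ for $T\in[n]^m$, and $\hat F(T)=\mathbb{E}_{Y\in[n]^m}[F(Y)\overline{\chi_T(Y)}]$ for $F:[n]^m\to\mathbb{R}$, so $F=\sum_T\hat F(T)\chi_T$. $F$ is permutation-invariant if $F(x_1,\dots,x_m)=F(x_{\pi(1)},\dots,x_{\pi(m)})$ for every permutation $\pi$. For $F:[n]^m\to\mathbb{R}$ and $0\le i\le m$, $f_{i,F}:[n]^i\to\mathbb{C}$ is $f_{i,F}(x_1,\dots,x_i)=\sum_{(T_1,\dots,T_i)\in([n]\setminus\{0\})^i}\hat F(T_1,\dots,T_i,0,\dots,0)\chi_{T_1,\dots,T_i}(x_1,\dots,x_i)$. For $A=(a_1,\dots,a_r)\in[n]^r$, $r\le m-1$, the restriction $F|_A:[n]^{m-r}\to\mathbb{R}$ is $F|_A(x)=F(a_1,\dots,a_r,x)$,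 and $\delta_A(F)=\mathbb{E}_{x\in[n]^{m-r}}[F|_A(x)]$; for $A$ empty, $F|_A=F$ and $\delta_A(F)=\mathbb{E}[F]$. *)

theory Defs
  imports Complex_Main "HOL-Combinatorics.Permutations"
begin

text \<open>Tuples in [n]^m are lists of length m with entries in {0..<n}.\<close>
definition tuples :: "nat \<Rightarrow> nat \<Rightarrow> nat list set" where
  "tuples n m = {xs. length xs = m \<and> set xs \<subseteq> {..<n}}"

definition nz_tuples :: "nat \<Rightarrow> nat \<Rightarrow> nat list set" where
  "nz_tuples n m = {xs. length xs = m \<and> set xs \<subseteq> {1..<n}}"

definition chi :: "nat \<Rightarrow> nat list \<Rightarrow> nat list \<Rightarrow> complex" where
  "chi n T x = (\<Prod>j<length T. exp (2 * of_real pi * \<i> * of_nat (T ! j) * of_nat (x ! j) / of_nat n))"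

definition fourier :: "nat \<Rightarrow> nat \<Rightarrow> (nat list \<Rightarrow> real) \<Rightarrow> nat list \<Rightarrow> complex" where
  "fourier n m F T = (\<Sum>Y\<in>tuples n m. of_real (F Y) * cnj (chi n T Y)) / of_nat (card (tuples n m))"

definition fcoef :: "nat \<Rightarrow> nat \<Rightarrow> nat \<Rightarrow> (nat list \<Rightarrow> real) \<Rightarrow> nat list \<Rightarrow> complex" where
  "fcoef n m i F X = (\<Sum>T\<in>nz_tuples n i. fourier n m F (T @ replicate (m - i) 0) * chi n T X)"

definition restr :: "nat list \<Rightarrow> (nat list \<Rightarrow> real) \<Rightarrow> nat list \<Rightarrow> real" where
  "restr A F = (\<lambda>x. F (A @ x))"

definition delta :: "nat \<Rightarrow> nat \<Rightarrow> nat list \<Rightarrow> (nat list \<Rightarrow> real) \<Rightarrow> real" where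
  "delta n m A F = (\<Sum>x\<in>tuples n (m - length A). restr A F x) / real (card (tuples n (m - length A)))"

definition perm_invariant :: "nat \<Rightarrow> nat \<Rightarrow> (nat list \<Rightarrow> real) \<Rightarrow> bool" where
  "perm_invariant n m F \<longleftrightarrow>
     (\<forall>xs\<in>tuples n m. \<forall>\<pi>. \<pi> permutes {..<m} \<longrightarrow> F (map (\<lambda>j. xs ! \<pi> j) [0..<m]) = F xs)"

end

theory Submission
  imports Defs "HOL-Analysis.Analysis"
begin

(* Splitting off the first coordinate, orthogonality of the characters of Z/nZ shows that
   summing t \<mapsto> F^(t, T, 0, ..., 0) chi_t(a) over all t gives the coefficient of F|_{a} at
   (T, 0, ..., 0). In f_{i+1,F}(a, X) only the terms with t \<noteq> 0 occur, and the missing term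
   F^(0, T, 0, ..., 0) equals F^(T, 0, ..., 0) by permutation invariance; summed against chi_T(X)
   it gives f_{i,F}(X). Since restricting the first coordinate preserves
   permutation invariance and delta_A(F|_{a}) = delta_{(a,A)}(F), (2) follows from (1) by
   induction on i, splitting the subsets of {0, ..., i} according to whether they contain 0. *)

lemma sum_lists_length_Suc:
  "(\<Sum>xs\<in>{xs. length xs = Suc m \<and> set xs \<subseteq> S}. g xs)
     = (\<Sum>x\<in>S. \<Sum>xs\<in>{xs. length xs = m \<and> set xs \<subseteq> S}. g (x # xs))"
proof -
  have "{xs. length xs = Suc m \<and> set xs \<subseteq> S}
          = (\<lambda>(x, xs). x # xs) ` (S \<times> {xs. length xs = m \<and> set xs \<subseteq> S})"
    by (auto simp: length_Suc_conv image_iff)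
  moreover have "inj_on (\<lambda>(x, xs). x # xs) (S \<times> {xs. length xs = m \<and> set xs \<subseteq> S})"
    by (auto simp: inj_on_def)
  ultimately show ?thesis
    by (simp add: sum.reindex sum.cartesian_product case_prod_unfold)
qed

lemma sum_tuples_Suc: "(\<Sum>Y\<in>tuples n (Suc m). g Y) = (\<Sum>y<n. \<Sum>Y\<in>tuples n m. g (y # Y))"
  unfolding tuples_def by (rule sum_lists_length_Suc)

lemma sum_nz_tuples_Suc:
  "(\<Sum>Y\<in>nz_tuples n (Suc m). g Y) = (\<Sum>y\<in>{1..<n}. \<Sum>Y\<in>nz_tuples n m. g (y # Y))"
  unfolding nz_tuples_def by (rule sum_lists_length_Suc)

lemma card_tuples: "card (tuples n m) = n ^ m"
  using card_lists_length_eq[of "{..<n}" m] by (simp add: tuples_def conj_commute)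

lemma nz_tuples_0 [simp]: "nz_tuples n 0 = {[]}"
  by (auto simp: nz_tuples_def)

lemma bij_betw_permute_list_tuples:
  assumes "p permutes {..<m}"
  shows "bij_betw (permute_list p) (tuples n m) (tuples n m)"
proof -
  have inv: "inv p permutes {..<m}"
    using assms by (rule permutes_inv)
  have "permute_list (inv p) (permute_list p Y) = Y" if "length Y = m" for Y
    using permute_list_compose[where f = p and g = "inv p" and xs = Y] inv that
    by (simp add: permutes_inv_o(1)[OF assms])
  moreover have "permute_list p (permute_list (inv p) Y) = Y" if "length Y = m" for Y
    using permute_list_compose[where f = "inv p" and g = p and xs = Y] assms that
    by (simp add: permutes_inv_o(2)[OF assms])
  moreover have "permute_list q ` tuples n m \<subseteq> tuples n m" if "q permutes {..<m}" for q
    using that by (auto simp: tuples_def)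
  ultimately show ?thesis
    using assms inv by (intro bij_betw_byWitness[where f' = "permute_list (inv p)"]) (auto simp: tuples_def)
qed

definition chi1 :: "nat \<Rightarrow> nat \<Rightarrow> nat \<Rightarrow> complex" where
  "chi1 n t x = exp (2 * of_real pi * \<i> * of_nat t * of_nat x / of_nat n)"

lemma chi_eq_prod_chi1: "chi n T X = (\<Prod>j<length T. chi1 n (T ! j) (X ! j))"
  by (simp add: chi_def chi1_def)

lemma chi_Nil [simp]: "chi n [] X = 1"
  by (simp add: chi_def)

lemma chi_Cons: "chi n (t # T) (x # X) = chi1 n t x * chi n T X"
  unfolding chi_eq_prod_chi1 length_Cons prod.lessThan_Suc_shift by simp

lemma chi_replicate_0 [simp]: "chi n (replicate m 0) X = 1"
  by (simp add: chi_def)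

lemma chi_permute_list:
  assumes "p permutes {..<length T}" and "length Y = length T"
  shows "chi n (permute_list p T) (permute_list p Y) = chi n T Y"
proof -
  have "chi n (permute_list p T) (permute_list p Y) = (\<Prod>j<length T. chi1 n (T ! p j) (Y ! p j))"
    unfolding chi_eq_prod_chi1 using assms by (intro prod.cong) (simp_all add: permute_list_nth)
  also have "\<dots> = chi n T Y"
    using prod.permute[OF assms(1), of "\<lambda>j. chi1 n (T ! j) (Y ! j)"]
    by (simp add: chi_eq_prod_chi1 comp_def)
  finally show ?thesis .
qed

lemma sum_chi1_orthogonal:
  assumes "a < n" "y < n"
  shows "(\<Sum>t<n. cnj (chi1 n t y) * chi1 n t a) = (if a = y then of_nat n else 0)"
proof -
  define z where "z j = exp (2 * of_real pi * \<i> * of_nat j / of_nat n)" for j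
  have "cnj (z y) * z y = 1"
    by (simp add: z_def exp_cnj flip: exp_add)
  then have cnj_z: "cnj (z y) = 1 / z y"
    by (simp add: z_def field_simps)
  have "chi1 n t x = z x ^ t" for t x
    by (simp add: chi1_def z_def flip: exp_of_nat_mult) (simp add: mult_ac)
  then have summand: "cnj (chi1 n t y) * chi1 n t a = (z a / z y) ^ t" for t
    by (simp add: cnj_z power_divide)
  have "(z a / z y) ^ n = 1"
    using assms by (simp add: z_def power_divide complex_root_unity)
  moreover have "z a / z y = 1 \<longleftrightarrow> a = y"
    using assms by (simp add: z_def complex_root_unity_eq)
  ultimately show ?thesis
    by (simp add: summand sum_gp_strict)
qed

lemma fourier_Cons:
  "fourier n (Suc m) F (t # T)
     = (\<Sum>y<n. \<Sum>Y\<in>tuples n m. of_real (F (y # Y)) * cnj (chi n T Y) * cnj (chi1 n t y))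
       / of_nat (n ^ Suc m)"
  unfolding fourier_def sum_tuples_Suc card_tuples by (simp add: chi_Cons mult_ac)

lemma fourier_restr_singleton:
  assumes "a < n"
  shows "fourier n m (restr [a] F) T = (\<Sum>t<n. fourier n (Suc m) F (t # T) * chi1 n t a)"
proof -
  define G where "G y Y = of_real (F (y # Y)) * cnj (chi n T Y)" for y Y
  define N where "N = (of_nat (n ^ Suc m) :: complex)"
  have "(\<Sum>t<n. fourier n (Suc m) F (t # T) * chi1 n t a)
      = (\<Sum>y<n. \<Sum>Y\<in>tuples n m. G y Y * (\<Sum>t<n. cnj (chi1 n t y) * chi1 n t a)) / N"
    unfolding fourier_Cons G_def N_def sum_divide_distrib sum_distrib_left sum_distrib_right
    by (subst sum.swap, subst (2) sum.swap) (simp add: mult_ac)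
  also have "\<dots> = (\<Sum>Y\<in>tuples n m. G a Y) * of_nat n / N"
  proof -
    have "(\<Sum>y<n. \<Sum>Y\<in>tuples n m. G y Y * (\<Sum>t<n. cnj (chi1 n t y) * chi1 n t a))
        = (\<Sum>y<n. if a = y then (\<Sum>Y\<in>tuples n m. G y Y) * of_nat n else 0)"
      using assms by (intro sum.cong refl) (auto simp: sum_chi1_orthogonal sum_distrib_right)
    then show ?thesis
      using assms by simp
  qed
  also have "\<dots> = fourier n m (restr [a] F) T"
    using assms unfolding fourier_def G_def N_def card_tuples restr_def
    by (simp add: sum_distrib_right field_simps)
  finally show ?thesis ..
qed

lemma perm_invariant_mset_eq:
  assumes "perm_invariant n m F" and "xs \<in> tuples n m" and "mset ys = mset xs"
  shows "F ys = F xs"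
proof -
  obtain p where "p permutes {..<length xs}" and "permute_list p xs = ys"
    using mset_eq_permutation[OF assms(3)] by metis
  then show ?thesis
    using assms(1,2) unfolding perm_invariant_def permute_list_def tuples_def by auto
qed

lemma perm_invariant_restr:
  assumes "perm_invariant n (Suc m) F" and "a < n"
  shows "perm_invariant n m (restr [a] F)"
  unfolding perm_invariant_def
proof (intro ballI allI impI)
  fix xs p assume xs: "xs \<in> tuples n m" and p: "p permutes {..<m}"
  then have "map (\<lambda>j. xs ! p j) [0..<m] = permute_list p xs"
    by (simp add: permute_list_def tuples_def)
  moreover have "F (a # permute_list p xs) = F (a # xs)"
    using xs p assms by (intro perm_invariant_mset_eq[OF assms(1)]) (auto simp: tuples_def)
  ultimately show "restr [a] F (map (\<lambda>j. xs ! p j) [0..<m]) = restr [a] F xs"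
    by (simp add: restr_def)
qed

lemma fourier_mset_eq:
  assumes inv: "perm_invariant n l F" and "length T = l" and "mset T' = mset T"
  shows "fourier n l F T' = fourier n l F T"
proof -
  obtain p where p: "p permutes {..<l}" and T': "permute_list p T = T'"
    using mset_eq_permutation[OF assms(3)] assms(2) by metis
  have "(\<Sum>Y\<in>tuples n l. of_real (F Y) * cnj (chi n T' Y))
      = (\<Sum>Y\<in>tuples n l. of_real (F (permute_list p Y)) * cnj (chi n T' (permute_list p Y)))"
    by (rule sum.reindex_bij_betw[OF bij_betw_permute_list_tuples[OF p], symmetric])
  also have "\<dots> = (\<Sum>Y\<in>tuples n l. of_real (F Y) * cnj (chi n T Y))"
  proof (intro sum.cong refl)
    fix Y assume Y: "Y \<in> tuples n l"
    then have "F (permute_list p Y) = F Y"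
      using p by (intro perm_invariant_mset_eq[OF inv]) (auto simp: tuples_def)
    moreover have "chi n T' (permute_list p Y) = chi n T Y"
      using Y p assms(2) T' chi_permute_list[of p T Y n] by (simp add: tuples_def)
    ultimately show "of_real (F (permute_list p Y)) * cnj (chi n T' (permute_list p Y))
        = of_real (F Y) * cnj (chi n T Y)" by simp
  qed
  finally show ?thesis
    by (simp add: fourier_def)
qed

lemma sum_nonzero_fourier_Cons:
  assumes inv: "perm_invariant n (Suc m) F" and "a < n" and "length T \<le> m"
  shows "(\<Sum>t\<in>{1..<n}. fourier n (Suc m) F (t # T @ replicate (m - length T) 0) * chi1 n t a)
       = fourier n m (restr [a] F) (T @ replicate (m - length T) 0)
         - fourier n (Suc m) F (T @ replicate (Suc m - length T) 0)"
proof -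
  let ?Z = "T @ replicate (m - length T) 0"
  have "{..<n} = insert 0 {1..<n}"
    using assms(2) by auto
  then have "fourier n m (restr [a] F) ?Z
      = fourier n (Suc m) F (0 # ?Z) + (\<Sum>t\<in>{1..<n}. fourier n (Suc m) F (t # ?Z) * chi1 n t a)"
    using fourier_restr_singleton[OF assms(2)] by (simp add: chi1_def)
  moreover have "fourier n (Suc m) F (0 # ?Z) = fourier n (Suc m) F (T @ replicate (Suc m - length T) 0)"
    using assms(3) by (intro fourier_mset_eq[OF inv]) (simp_all add: Suc_diff_le)
  ultimately show ?thesis
    by (simp add: algebra_simps)
qed

lemma fcoef_Cons:
  assumes inv: "perm_invariant n (Suc m) F" and "a < n" and "i \<le> m"
  shows "fcoef n (Suc m) (Suc i) F (a # X) = fcoef n m i (restr [a] F) X - fcoef n (Suc m) i F X"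
proof -
  have "fcoef n (Suc m) (Suc i) F (a # X)
     = (\<Sum>t\<in>{1..<n}. \<Sum>T\<in>nz_tuples n i.
          fourier n (Suc m) F (t # T @ replicate (m - i) 0) * chi1 n t a * chi n T X)"
    unfolding fcoef_def sum_nz_tuples_Suc by (simp add: chi_Cons mult.assoc)
  also have "\<dots> = (\<Sum>T\<in>nz_tuples n i. (\<Sum>t\<in>{1..<n}.
                      fourier n (Suc m) F (t # T @ replicate (m - i) 0) * chi1 n t a) * chi n T X)"
    by (subst sum.swap) (simp add: sum_distrib_right)
  also have "\<dots> = (\<Sum>T\<in>nz_tuples n i. (fourier n m (restr [a] F) (T @ replicate (m - i) 0)
                                       - fourier n (Suc m) F (T @ replicate (Suc m - i) 0)) * chi n T X)"
    using sum_nonzero_fourier_Cons[OF inv assms(2)] assms(3) by (intro sum.cong) (auto simp: nz_tuples_def)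
  also have "\<dots> = fcoef n m i (restr [a] F) X - fcoef n (Suc m) i F X"
    unfolding fcoef_def by (simp add: left_diff_distrib sum_subtractf)
  finally show ?thesis .
qed

lemma fcoef_0: "fcoef n m 0 F X = of_real (delta n m [] F)"
  by (simp add: fcoef_def fourier_def delta_def restr_def)

lemma delta_restr: "delta n m A (restr [a] F) = delta n (Suc m) (a # A) F"
  by (simp add: delta_def restr_def)

lemma nths_Cons_image_Suc: "nths (a # X) (Suc ` B) = nths X B"
  by (simp add: nths_Cons inj_image_mem_iff)

lemma nths_Cons_insert_0_image_Suc: "nths (a # X) (insert 0 (Suc ` B)) = a # nths X B"
  by (simp add: nths_Cons inj_image_mem_iff)

lemma sum_Pow_lessThan_Suc:
  "(\<Sum>B\<in>Pow {..<Suc i}. g B)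
     = (\<Sum>B\<in>Pow {..<i}. g (Suc ` B)) + (\<Sum>B\<in>Pow {..<i}. g (insert 0 (Suc ` B)))"
proof -
  have bij: "bij_betw ((`) Suc) (Pow {..<i}) (Pow (Suc ` {..<i}))"
    by (intro bij_betw_image_Pow inj_on_imp_bij_betw) simp
  have "(\<Sum>B\<in>Pow {..<Suc i}. g B)
      = (\<Sum>B\<in>Pow (Suc ` {..<i}). g B) + (\<Sum>B\<in>Pow (Suc ` {..<i}). g (insert 0 B))"
  proof -
    have "inj_on (insert 0) (Pow (Suc ` {..<i}))"
      by (auto simp: inj_on_def insert_ident)
    then show ?thesis
      unfolding lessThan_Suc_eq_insert_0 Pow_insert
      by (subst sum.union_disjoint) (auto simp: sum.reindex)
  qed
  also have "\<dots> = (\<Sum>B\<in>Pow {..<i}. g (Suc ` B)) + (\<Sum>B\<in>Pow {..<i}. g (insert 0 (Suc ` B)))"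
    using sum.reindex_bij_betw[OF bij, of g] sum.reindex_bij_betw[OF bij, of "\<lambda>B. g (insert 0 B)"]
    by simp
  finally show ?thesis .
qed

lemma fcoef_eq_alternating_sum_delta:
  assumes "perm_invariant n l F" and "i \<le> l" and "X \<in> tuples n i"
  shows "fcoef n l i F X
           = (\<Sum>B\<in>Pow {..<i}. (-1) ^ (i - card B) * complex_of_real (delta n l (nths X B) F))"
  using assms
proof (induction i arbitrary: l F X)
  case 0
  then show ?case
    by (simp add: fcoef_0)
next
  case (Suc i)
  obtain a X' where X: "X = a # X'" and a: "a < n" and X': "X' \<in> tuples n i"
    using Suc.prems(3) by (cases X) (auto simp: tuples_def)
  obtain m where l: "l = Suc m" and i: "i \<le> m"
    using Suc.prems(2) by (cases l) auto
  let ?s = "\<lambda>B. (-1) ^ (i - card B) :: complex"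
  have card: "card B \<le> i" if "B \<in> Pow {..<i}" for B
    using that card_mono[of "{..<i}" B] by auto
  have "fcoef n l (Suc i) F X = fcoef n m i (restr [a] F) X' - fcoef n l i F X'"
    using fcoef_Cons[OF _ a i] Suc.prems(1) by (simp add: X l)
  also have "\<dots> = (\<Sum>B\<in>Pow {..<i}. ?s B * of_real (delta n l (a # nths X' B) F))
                 - (\<Sum>B\<in>Pow {..<i}. ?s B * of_real (delta n l (nths X' B) F))"
    using Suc.IH[of m "restr [a] F" X'] Suc.IH[of l F X'] Suc.prems(1,2) X' a i
    by (simp add: l perm_invariant_restr delta_restr)
  also have "\<dots> = (\<Sum>B\<in>Pow {..<Suc i}. (-1) ^ (Suc i - card B) * of_real (delta n l (nths X B) F))"
    unfolding sum_Pow_lessThan_Suc X nths_Cons_image_Suc nths_Cons_insert_0_image_Suc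
    using card by (simp add: card_image finite_subset[of _ "{..<i}"] sum_negf[symmetric] Suc_diff_le)
  finally show ?case .
qed

theorem lemmaC10:
  fixes n l :: nat and F :: "nat list \<Rightarrow> real"
  assumes "n > 0"
    and "perm_invariant n l F"
  shows "(\<forall>a<n. \<forall>i<l. \<forall>X\<in>tuples n i.
            fcoef n l (Suc i) F (a # X) = fcoef n (l - 1) i (restr [a] F) X - fcoef n l i F X)
       \<and> (\<forall>i\<le>l. \<forall>X\<in>tuples n i.
            fcoef n l i F X = (\<Sum>B\<in>Pow {..<i}. (-1) ^ (i - card B) * complex_of_real (delta n l (nths X B) F)))"
proof -
  have "fcoef n l (Suc i) F (a # X) = fcoef n (l - 1) i (restr [a] F) X - fcoef n l i F X"
    if "a < n" and "i < l" for a i X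
  proof -
    obtain m where "l = Suc m" and "i \<le> m"
      using \<open>i < l\<close> by (cases l) auto
    then show ?thesis
      using fcoef_Cons assms(2) \<open>a < n\<close> by simp
  qed
  then show ?thesis
    using fcoef_eq_alternating_sum_delta[OF assms(2)] by blast
qed

end
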